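(* Let $\mathfrak g$ be an $n$-dimensional filiform Lie algebra with associated triple $(z_1,n-2,n)$, $z_1<n-2$. Then for every $\ell$ with $3\le\ell\le\theta_2(\mathfrak g)-1$, $$\dim[C^2\mathfrak g,C^{\ell+1}\mathfrak g]=\dim[C^2\mathfrak g,C^\ell\mathfrak g]-1.$$ Moreover $\theta_2(\mathfrak g)=\dim[C^2\mathfrak g,C^2\mathfrak g]+3$.
   Context: All Lie algebras are over $\mathbb C$; $C^1\mathfrak g=\mathfrak g$, $C^k\mathfrak g=[C^{k-1}\mathfrak g,\mathfrak g]$. A Lie algebra is filiform if $\dim\mathfrak g=n\ge2$ and $\dim C^k\mathfrak g=n-k$ for $2\le k\le n$. An adapted basis of a filiform $\mathfrak g$ is a basis $\{e_1,\dots,e_n\}$ with $[e_1,e_h]=e_{h-1}$ ($3\le h\le n$), $[e_2,e_h]=0$ ($1\le h\le n$), $[e_3,e_h]=0$ ($2\le h\le n$). For non-model filiform $\mathfrak g$, $z_1=\min\{k\ge4:[e_k,e_n]\ne0\}$, $z_2=\min\{k\ge4:[e_k,e_{k+1}]\ne0\}$ (in any adapted basis) are invariants; $(z_1,z_2,n)$ is the associated triple. For a nilpotent Lie algebra $\mathfrak g$ and $k\ge1$, $\theta_k(\mathfrak g)$ is the minimal $\ell$ such that $[C^k\mathfrak g,C^\ell\mathfrak g]=\{0\}$. *)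

theory Defs
  imports Complex_Main
begin

definition lie_algebra :: "(complex \<Rightarrow> 'v::ab_group_add \<Rightarrow> 'v) \<Rightarrow> ('v \<Rightarrow> 'v \<Rightarrow> 'v) \<Rightarrow> bool" where
  "lie_algebra sc br \<longleftrightarrow>
     Vector_Spaces.vector_space sc \<and>
     (\<forall>x. Vector_Spaces.linear sc sc (br x)) \<and>
     (\<forall>y. Vector_Spaces.linear sc sc (\<lambda>x. br x y)) \<and>
     (\<forall>x. br x x = 0) \<and>
     (\<forall>x y z. br x (br y z) + br y (br z x) + br z (br x y) = 0)"

definition brs :: "(complex \<Rightarrow> 'v::ab_group_add \<Rightarrow> 'v) \<Rightarrow> ('v \<Rightarrow> 'v \<Rightarrow> 'v) \<Rightarrow> 'v set \<Rightarrow> 'v set \<Rightarrow> 'v set" where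
  "brs sc br A B = module.span sc {br a b | a b. a \<in> A \<and> b \<in> B}"

text \<open>Lower central series: C^1 = g, C^k = [C^(k-1), g]  (C^0 := g by convention, unused).\<close>
fun lcs :: "(complex \<Rightarrow> 'v::ab_group_add \<Rightarrow> 'v) \<Rightarrow> ('v \<Rightarrow> 'v \<Rightarrow> 'v) \<Rightarrow> nat \<Rightarrow> 'v set" where
  "lcs sc br 0 = UNIV"
| "lcs sc br (Suc 0) = UNIV"
| "lcs sc br (Suc (Suc k)) = brs sc br (lcs sc br (Suc k)) UNIV"

definition ldim :: "(complex \<Rightarrow> 'v::ab_group_add \<Rightarrow> 'v) \<Rightarrow> 'v set \<Rightarrow> nat" where
  "ldim sc S = vector_space.dim sc S"

definition has_dim :: "(complex \<Rightarrow> 'v::ab_group_add \<Rightarrow> 'v) \<Rightarrow> nat \<Rightarrow> bool" where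
  "has_dim sc n \<longleftrightarrow> (\<exists>B. finite B \<and> module.span sc B = UNIV) \<and> vector_space.dim sc (UNIV::'v set) = n"

definition filiform :: "(complex \<Rightarrow> 'v::ab_group_add \<Rightarrow> 'v) \<Rightarrow> ('v \<Rightarrow> 'v \<Rightarrow> 'v) \<Rightarrow> nat \<Rightarrow> bool" where
  "filiform sc br n \<longleftrightarrow> lie_algebra sc br \<and> has_dim sc n \<and> n \<ge> 2 \<and>
     (\<forall>k. 2 \<le> k \<and> k \<le> n \<longrightarrow> ldim sc (lcs sc br k) = n - k)"

definition is_basis_seq :: "(complex \<Rightarrow> 'v::ab_group_add \<Rightarrow> 'v) \<Rightarrow> nat \<Rightarrow> (nat \<Rightarrow> 'v) \<Rightarrow> bool" where
  "is_basis_seq sc n e \<longleftrightarrow> inj_on e {1..n} \<and> \<not> module.dependent sc (e ` {1..n})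
     \<and> module.span sc (e ` {1..n}) = UNIV"

definition adapted_basis :: "(complex \<Rightarrow> 'v::ab_group_add \<Rightarrow> 'v) \<Rightarrow> ('v \<Rightarrow> 'v \<Rightarrow> 'v) \<Rightarrow> nat \<Rightarrow> (nat \<Rightarrow> 'v) \<Rightarrow> bool" where
  "adapted_basis sc br n e \<longleftrightarrow> is_basis_seq sc n e \<and>
     (\<forall>h. 3 \<le> h \<and> h \<le> n \<longrightarrow> br (e 1) (e h) = e (h - 1)) \<and>
     (\<forall>h. 1 \<le> h \<and> h \<le> n \<longrightarrow> br (e 2) (e h) = 0) \<and>
     (\<forall>h. 2 \<le> h \<and> h \<le> n \<longrightarrow> br (e 3) (e h) = 0)"

definition model_filiform :: "(complex \<Rightarrow> 'v::ab_group_add \<Rightarrow> 'v) \<Rightarrow> ('v \<Rightarrow> 'v \<Rightarrow> 'v) \<Rightarrow> nat \<Rightarrow> bool" where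
  "model_filiform sc br n \<longleftrightarrow> (\<exists>e. adapted_basis sc br n e \<and>
     (\<forall>i j. 2 \<le> i \<and> i \<le> n \<and> 2 \<le> j \<and> j \<le> n \<longrightarrow> br (e i) (e j) = 0))"

definition assoc_triple :: "(complex \<Rightarrow> 'v::ab_group_add \<Rightarrow> 'v) \<Rightarrow> ('v \<Rightarrow> 'v \<Rightarrow> 'v) \<Rightarrow> nat \<Rightarrow> nat \<Rightarrow> nat \<Rightarrow> bool" where
  "assoc_triple sc br z1 z2 n \<longleftrightarrow> filiform sc br n \<and> \<not> model_filiform sc br n \<and>
     (\<exists>e. adapted_basis sc br n e \<and>
        4 \<le> z1 \<and> z1 \<le> n \<and> br (e z1) (e n) \<noteq> 0 \<and>
        (\<forall>k. 4 \<le> k \<and> k < z1 \<longrightarrow> br (e k) (e n) = 0) \<and>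
        4 \<le> z2 \<and> z2 + 1 \<le> n \<and> br (e z2) (e (z2 + 1)) \<noteq> 0 \<and>
        (\<forall>k. 4 \<le> k \<and> k < z2 \<longrightarrow> br (e k) (e (k + 1)) = 0))"

definition theta :: "(complex \<Rightarrow> 'v::ab_group_add \<Rightarrow> 'v) \<Rightarrow> ('v \<Rightarrow> 'v \<Rightarrow> 'v) \<Rightarrow> nat \<Rightarrow> nat" where
  "theta sc br k = (LEAST l. 1 \<le> l \<and> brs sc br (lcs sc br k) (lcs sc br l) = {0})"

end

theory Submission
  imports Defs
begin

(*
  In an adapted basis, ad e_1 is a derivation sending e_h to e_(h-1). Since z2 = n - 2, all
  brackets [e_k, e_(k+1)] with 4 <= k < n - 2 vanish, and pushing them down with ad e_1 shows
  that e_2, ..., e_(n-2) span an abelian subalgebra. Because C^l g is spanned by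
  e_2, ..., e_(n+1-l), the ideal [C^2 g, C^l g] is therefore spanned by the brackets
  [e_j, e_(n-1)] with j <= n + 1 - l, which are the vectors (ad e_1)^t [e_(n-2), e_(n-1)]
  for t >= l - 3. This orbit of a nilpotent map is linearly independent until it first
  vanishes, at some step p; so dim [C^2 g, C^l g] = p - (l - 3) and theta_2 = p + 3.
*)

context vector_space
begin

lemma linear_funpow: "Vector_Spaces.linear scale scale f \<Longrightarrow> Vector_Spaces.linear scale scale (f ^^ k)"
  by (induction k) (simp_all add: linear_id Vector_Spaces.linear_compose)

lemma funpow_vanish_mono:
  assumes f: "Vector_Spaces.linear scale scale f" and "(f ^^ p) v = 0" "p \<le> m"
  shows "(f ^^ m) v = 0"
proof -
  have "(f ^^ m) v = (f ^^ (m - p)) ((f ^^ p) v)"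
    using \<open>p \<le> m\<close> funpow_add[of "m - p" p f] by simp
  then show ?thesis
    using \<open>(f ^^ p) v = 0\<close> module_hom.zero[OF module_hom_linearI[OF linear_funpow[OF f]]]
    by simp
qed

lemma independent_card_nilpotent_orbit:
  assumes f: "Vector_Spaces.linear scale scale f"
    and vanish: "(f ^^ p) v = 0" and nonzero: "(f ^^ (p - 1)) v \<noteq> 0"
  shows "independent ((\<lambda>t. (f ^^ t) v) ` {a..<p}) \<and> card ((\<lambda>t. (f ^^ t) v) ` {a..<p}) = p - a"
proof (induction "p - a" arbitrary: a)
  case 0
  then show ?case by (simp add: independent_empty)
next
  case (Suc d)
  let ?orbit = "\<lambda>a. (\<lambda>t. (f ^^ t) v) ` {a..<p}"
  let ?g = "f ^^ (p - 1 - a)"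
  have a: "a < p" using Suc by simp
  have IH: "independent (?orbit (Suc a)) \<and> card (?orbit (Suc a)) = p - Suc a"
    using Suc by (metis Suc_diff_Suc diff_Suc_1 a)
  have "?g ((f ^^ t) v) = 0" if "Suc a \<le> t" for t
  proof -
    have "?g ((f ^^ t) v) = (f ^^ (p - 1 - a + t)) v" by (simp add: funpow_add)
    then show ?thesis using funpow_vanish_mono[OF f vanish] that by simp
  qed
  then have "span (?g ` ?orbit (Suc a)) \<subseteq> {0}"
    by (intro span_minimal) (auto simp: subspace_single_0 image_image)
  then have kill: "?g ` span (?orbit (Suc a)) \<subseteq> {0}"
    using module_hom.span_image[OF module_hom_linearI[OF linear_funpow[OF f]]] by metis
  \<comment> \<open>\<open>f ^^ (p - 1 - a)\<close> kills every later orbit vector but not \<open>(f ^^ a) v\<close>.\<close>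
  have notin: "(f ^^ a) v \<notin> span (?orbit (Suc a))"
  proof
    assume "(f ^^ a) v \<in> span (?orbit (Suc a))"
    then have "?g ((f ^^ a) v) = 0" using kill by blast
    moreover have "?g ((f ^^ a) v) = (f ^^ (p - 1)) v"
      using a funpow_add[of "p - 1 - a" a f] by simp
    ultimately show False using nonzero by simp
  qed
  have "{a..<p} = insert a {Suc a..<p}" using a by auto
  then have "?orbit a = insert ((f ^^ a) v) (?orbit (Suc a))" by simp
  then show ?case
    using IH notin a span_base[of _ "?orbit (Suc a)"]
    by (auto simp: independent_insert)
qed

end

locale lie_alg =
  fixes sc :: "complex \<Rightarrow> 'v::ab_group_add \<Rightarrow> 'v" and br :: "'v \<Rightarrow> 'v \<Rightarrow> 'v"
  assumes lie_algebra: "lie_algebra sc br"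
begin

sublocale vector_space sc
  using lie_algebra unfolding lie_algebra_def by blast

lemma linear_br_right: "Vector_Spaces.linear sc sc (br x)"
  using lie_algebra unfolding lie_algebra_def by blast

lemma linear_br_left: "Vector_Spaces.linear sc sc (\<lambda>x. br x y)"
  using lie_algebra unfolding lie_algebra_def by blast

lemma br_self [simp]: "br x x = 0"
  using lie_algebra unfolding lie_algebra_def by blast

lemma jacobi: "br x (br y z) + br y (br z x) + br z (br x y) = 0"
  using lie_algebra unfolding lie_algebra_def by blast

lemma br_add_left: "br (x + y) z = br x z + br y z"
  using linear_br_left[of z] unfolding Vector_Spaces.linear_iff by blast

lemma br_add_right: "br x (y + z) = br x y + br x z"
  using linear_br_right[of x] unfolding Vector_Spaces.linear_iff by blast

lemma br_zero_left [simp]: "br 0 x = 0"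
  using br_add_left[of 0 0 x] by simp

lemma br_zero_right [simp]: "br x 0 = 0"
  using br_add_right[of x 0 0] by simp

lemma br_antisym: "br x y = - br y x"
proof -
  have "0 = br (x + y) (x + y)" by simp
  also have "\<dots> = br x y + br y x" by (simp only: br_add_left br_add_right) simp
  finally have "br x y + br y x = 0" by (rule sym)
  then show ?thesis by (simp add: eq_neg_iff_add_eq_0)
qed

lemma br_leibniz: "br x (br y z) = br (br x y) z + br y (br x z)"
  using jacobi[of x y z] br_antisym[of z "br x y"] br_antisym[of z x]
    module_hom.neg[OF module_hom_linearI[OF linear_br_right], of y]
  by (simp add: eq_neg_iff_add_eq_0 algebra_simps)

lemma brs_span: "brs sc br (span A) (span B) = span {br a b |a b. a \<in> A \<and> b \<in> B}"
proof
  let ?G = "span {br a b |a b. a \<in> A \<and> b \<in> B}"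
  have preimage_subspace: "subspace (f -` ?G)" if "Vector_Spaces.linear sc sc f" for f
    using module_hom.subspace_vimage[OF module_hom_linearI[OF that]] subspace_span by blast
  have "br a y \<in> ?G" if "a \<in> A" "y \<in> span B" for a y
    using span_minimal[of B "br a -` ?G"] preimage_subspace[OF linear_br_right] that
    by (auto intro: span_base)
  then have "br x y \<in> ?G" if "x \<in> span A" "y \<in> span B" for x y
    using span_minimal[of A "(\<lambda>x. br x y) -` ?G"] preimage_subspace[OF linear_br_left] that
    by auto
  then show "brs sc br (span A) (span B) \<subseteq> ?G"
    unfolding brs_def by (intro span_minimal) (auto simp: subspace_span)
  show "?G \<subseteq> brs sc br (span A) (span B)"
    unfolding brs_def by (rule span_mono) (auto intro: span_base)
qed

lemma subspace_lcs: "subspace (lcs sc br k)"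
proof (cases k)
  case (Suc m)
  then show ?thesis by (cases m) (simp_all add: brs_def subspace_span subspace_UNIV)
qed (simp add: subspace_UNIV)

lemma br_mem_lcs_Suc: "x \<in> lcs sc br k \<Longrightarrow> br y x \<in> lcs sc br (Suc k)"
proof (cases k)
  case (Suc m)
  assume "x \<in> lcs sc br k"
  then have "br x y \<in> lcs sc br (Suc k)"
    using Suc by (auto simp: brs_def intro: span_base)
  then show ?thesis
    using subspace_neg[OF subspace_lcs] br_antisym[of y x] by metis
qed simp

end

locale filiform_adapted =
  fixes sc :: "complex \<Rightarrow> 'v::ab_group_add \<Rightarrow> 'v" and br :: "'v \<Rightarrow> 'v \<Rightarrow> 'v"
    and n :: nat and e :: "nat \<Rightarrow> 'v"
  assumes filiform: "filiform sc br n"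
    and adapted: "adapted_basis sc br n e"
begin

sublocale lie_alg sc br
  using filiform by unfold_locales (simp add: filiform_def)

lemma br_e1: "3 \<le> h \<Longrightarrow> h \<le> n \<Longrightarrow> br (e 1) (e h) = e (h - 1)"
  using adapted unfolding adapted_basis_def by blast

lemma br_e2_e3: "2 \<le> i \<Longrightarrow> i \<le> 3 \<Longrightarrow> 2 \<le> j \<Longrightarrow> j \<le> n \<Longrightarrow> br (e i) (e j) = 0"
proof -
  assume "2 \<le> i" "i \<le> 3" "2 \<le> j" "j \<le> n"
  moreover have "i = 2 \<or> i = 3" using \<open>2 \<le> i\<close> \<open>i \<le> 3\<close> by linarith
  ultimately show ?thesis using adapted unfolding adapted_basis_def by auto
qed

lemma dim_lcs: "2 \<le> k \<Longrightarrow> k \<le> n \<Longrightarrow> dim (lcs sc br k) = n - k"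
  using filiform unfolding filiform_def ldim_def by blast

lemma inj_on_e: "inj_on e {1..n}"
  and independent_e: "independent (e ` {1..n})"
  and span_e: "span (e ` {1..n}) = UNIV"
  using adapted unfolding adapted_basis_def is_basis_seq_def by blast+

interpretation finite_dimensional_vector_space sc "e ` {1..n}"
  by unfold_locales (fact finite_imageI[OF finite_atLeastAtMost], fact independent_e, fact span_e)

lemma e_nonzero: "1 \<le> h \<Longrightarrow> h \<le> n \<Longrightarrow> e h \<noteq> 0"
  using dependent_zero[of "e ` {1..n}"] independent_e by force

lemma br_e1_leibniz:
  "3 \<le> i \<Longrightarrow> i \<le> n \<Longrightarrow> 3 \<le> j \<Longrightarrow> j \<le> n \<Longrightarrow>
    br (e 1) (br (e i) (e j)) = br (e (i - 1)) (e j) + br (e i) (e (j - 1))"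
  using br_leibniz[of "e 1" "e i" "e j"] br_e1 by simp

lemma e_mem_lcs: "2 \<le> h \<Longrightarrow> h + k \<le> n \<Longrightarrow> e h \<in> lcs sc br (Suc k)"
proof (induction k arbitrary: h)
  case (Suc k)
  then have "e (h + 1) \<in> lcs sc br (Suc k)" by simp
  then have "br (e 1) (e (h + 1)) \<in> lcs sc br (Suc (Suc k))" by (rule br_mem_lcs_Suc)
  with Suc.prems show ?case using br_e1[of "h + 1"] by simp
qed simp

lemma lcs_eq_span_le:
  assumes k: "2 \<le> k" "k \<le> n"
  shows "lcs sc br k = span (e ` {2..n + 1 - k})"
proof (rule sym, rule subspace_dim_equal)
  show "span (e ` {2..n + 1 - k}) \<subseteq> lcs sc br k"
    by (intro span_minimal subspace_lcs) (use k e_mem_lcs[of _ "k - 1"] in auto)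
  have sub: "{2..n + 1 - k} \<subseteq> {1..n}" using k by auto
  then have "independent (e ` {2..n + 1 - k})"
    by (intro independent_mono[OF independent_e] image_mono)
  moreover have "card (e ` {2..n + 1 - k}) = n - k"
    using card_image[OF inj_on_subset[OF inj_on_e sub]] k by simp
  ultimately show "dim (lcs sc br k) \<le> dim (span (e ` {2..n + 1 - k}))"
    using k dim_lcs by (simp add: dim_eq_card_independent)
qed (simp_all add: subspace_lcs)

lemma lcs_eq_span: "2 \<le> k \<Longrightarrow> lcs sc br k = span (e ` {2..n + 1 - k})"
proof (induction k rule: nat_induct_at_least)
  case base
  show ?case using lcs_eq_span_le[of 2] filiform by (simp add: filiform_def)
next
  case (Suc k)
  show ?case
  proof (cases "Suc k \<le> n")
    case False
    then have "lcs sc br k = {0}" using Suc by simp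
    then have "lcs sc br (Suc k) = brs sc br {0} UNIV"
      using Suc by (cases k) simp_all
    also have "\<dots> = {0}"
      unfolding brs_def by (simp add: setcompr_eq_image)
    finally show ?thesis using False by simp
  qed (use Suc.hyps lcs_eq_span_le[of "Suc k"] in simp)
qed

end

locale filiform_z2_n_minus_2 = filiform_adapted +
  assumes n_ge_6: "6 \<le> n"
    and br_consecutive_zero: "\<And>k. 4 \<le> k \<Longrightarrow> k < n - 2 \<Longrightarrow> br (e k) (e (k + 1)) = 0"
    and br_top_nonzero: "br (e (n - 2)) (e (n - 1)) \<noteq> 0"
begin

text \<open>Induction on the distance \<open>d\<close>, using
  [e_i, e_(i+d)] = [e_1, [e_(i+1), e_(i+d)]] - [e_(i+1), e_(i+d-1)].\<close>

lemma br_e_abelian_dist: "2 \<le> i \<Longrightarrow> i + d \<le> n - 2 \<Longrightarrow> br (e i) (e (i + d)) = 0"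
proof (induction d arbitrary: i rule: less_induct)
  case (less d)
  consider "i \<le> 3" | "d = 0" | "d = 1" "4 \<le> i" | "2 \<le> d" "4 \<le> i"
    by linarith
  then show ?case
  proof cases
    case 1
    show ?thesis by (rule br_e2_e3) (use 1 less.prems in auto)
  next
    case 2
    then show ?thesis by simp
  next
    case 3
    then show ?thesis using br_consecutive_zero[of i] less.prems by simp
  next
    case 4
    define j where "j = d - 2"
    have d: "d = j + 2" using 4 by (simp add: j_def)
    have "br (e (i + 1)) (e ((i + 1) + (j + 1))) = 0"
      by (rule less.IH) (use 4 d less.prems in auto)
    moreover have "br (e (i + 1)) (e ((i + 1) + j)) = 0"
      by (rule less.IH) (use 4 d less.prems in auto)
    moreover have "br (e 1) (br (e (i + 1)) (e (i + j + 2)))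
        = br (e i) (e (i + j + 2)) + br (e (i + 1)) (e (i + j + 1))"
      using br_e1_leibniz[of "i + 1" "i + j + 2"] 4 d less.prems by simp
    ultimately show ?thesis using d by (simp add: add.assoc)
  qed
qed

lemma br_e_abelian: "2 \<le> i \<Longrightarrow> i \<le> n - 2 \<Longrightarrow> 2 \<le> j \<Longrightarrow> j \<le> n - 2 \<Longrightarrow> br (e i) (e j) = 0"
  using br_e_abelian_dist[of i "j - i"] br_e_abelian_dist[of j "i - j"] br_antisym[of "e i" "e j"]
  by (cases "i \<le> j") simp_all

definition chain :: "nat \<Rightarrow> 'a" where
  "chain t = (br (e 1) ^^ t) (br (e (n - 2)) (e (n - 1)))"

lemma chain_Suc: "chain (Suc t) = br (e 1) (chain t)"
  by (simp add: chain_def)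

lemma br_e_last: "2 \<le> i \<Longrightarrow> i \<le> n - 2 \<Longrightarrow> br (e i) (e (n - 1)) = chain (n - 2 - i)"
proof (induction "n - 2 - i" arbitrary: i)
  case 0
  then have "i = n - 2" by simp
  then show ?case by (simp add: chain_def)
next
  case (Suc t)
  have "chain (n - 2 - i) = br (e 1) (chain t)"
    using chain_Suc Suc.hyps(2) by metis
  also have "\<dots> = br (e 1) (br (e (i + 1)) (e (n - 1)))"
  proof -
    have "t = n - 2 - (i + 1)" "i + 1 \<le> n - 2" using Suc.hyps(2) by simp_all
    then show ?thesis using Suc.hyps(1)[of "i + 1"] Suc.prems by simp
  qed
  also have "\<dots> = br (e i) (e (n - 1)) + br (e (i + 1)) (e (n - 2))"
    using br_e1_leibniz[of "i + 1" "n - 1"] n_ge_6 Suc.prems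
    by (simp add: numeral_eq_Suc)
  also have "br (e (i + 1)) (e (n - 2)) = 0"
    using br_e_abelian Suc.hyps(2) Suc.prems by simp
  finally show ?case by simp
qed

definition chain_length :: nat where
  "chain_length = (LEAST t. chain t = 0)"

lemma chain_vanishes: "chain (n - 5) = 0"
  using br_e_last[of 3] br_e2_e3[of 3 "n - 1"] n_ge_6 by (simp add: numeral_eq_Suc)

lemma chain_length_vanishes: "chain chain_length = 0"
  unfolding chain_length_def by (rule LeastI[of "\<lambda>t. chain t = 0", OF chain_vanishes])

lemma chain_length_le: "chain_length \<le> n - 5"
  unfolding chain_length_def by (rule Least_le[of "\<lambda>t. chain t = 0", OF chain_vanishes])

lemma chain_nonzero: "t < chain_length \<Longrightarrow> chain t \<noteq> 0"
  unfolding chain_length_def by (rule not_less_Least)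

lemma chain_length_pos: "0 < chain_length"
  using chain_length_vanishes br_top_nonzero by (cases chain_length) (simp_all add: chain_def)

lemma chain_vanishes_ge: "chain_length \<le> t \<Longrightarrow> chain t = 0"
  using funpow_vanish_mono[OF linear_br_right chain_length_vanishes[unfolded chain_def]]
  by (simp add: chain_def)

lemma independent_card_chain:
  "independent (chain ` {a..<chain_length}) \<and> card (chain ` {a..<chain_length}) = chain_length - a"
  using independent_card_nilpotent_orbit[OF linear_br_right chain_length_vanishes[unfolded chain_def]]
    chain_nonzero[of "chain_length - 1"] chain_length_pos
  by (simp add: chain_def[abs_def])

lemma dim_span_chain: "dim (span (chain ` {a..<chain_length})) = chain_length - a"
  using independent_card_chain by (simp add: dim_eq_card_independent)

lemma span_chain_eq_0_iff: "span (chain ` {a..<chain_length}) = {0} \<longleftrightarrow> chain_length \<le> a"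
  using span_base[of "chain a" "chain ` {a..<chain_length}"] chain_nonzero[of a]
  by (cases "a < chain_length") auto

lemma chain_mem_span: "a \<le> t \<Longrightarrow> chain t \<in> span (chain ` {a..<chain_length})"
  using chain_vanishes_ge[of t] by (cases "t < chain_length") (auto intro: span_base span_zero)

lemma br_e_mem_span_chain:
  assumes "2 \<le> l" "2 \<le> i" "i \<le> n - 1" "2 \<le> j" "j \<le> n + 1 - l"
  shows "br (e i) (e j) \<in> span (chain ` {l - 3..<chain_length})"
proof -
  consider "i \<le> n - 2" "j \<le> n - 2" | "i = n - 1" "j = n - 1" | "i \<le> n - 2" "j = n - 1"
    | "i = n - 1" "j \<le> n - 2"
    using assms by linarith
  then show ?thesis
  proof cases
    case 1
    then show ?thesis using br_e_abelian assms by (simp add: span_zero)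
  next
    case 2
    then show ?thesis by (simp add: span_zero)
  next
    case 3
    then show ?thesis using assms br_e_last chain_mem_span by simp
  next
    case 4
    then have "br (e i) (e j) = - chain (n - 2 - j)"
      using assms br_e_last br_antisym[of "e i" "e j"] by simp
    then show ?thesis using 4 assms chain_mem_span[of "l - 3"] span_neg by simp
  qed
qed

lemma chain_mem_span_br:
  assumes "l - 3 \<le> t" "t < chain_length"
  shows "chain t \<in> span {br a b |a b. a \<in> e ` {2..n - 1} \<and> b \<in> e ` {2..n + 1 - l}}"
proof -
  have t: "t \<le> n - 6" using assms chain_length_le n_ge_6 by simp
  then have "n - 2 - (n - 2 - t) = t" by simp
  then have chain_t: "chain t = - br (e (n - 1)) (e (n - 2 - t))"
    using br_e_last[of "n - 2 - t"] br_antisym[of "e (n - 1)"] t n_ge_6 by simp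
  have "e (n - 1) \<in> e ` {2..n - 1}" "e (n - 2 - t) \<in> e ` {2..n + 1 - l}"
    using assms t n_ge_6 by (intro imageI; simp; arith)+
  then have "br (e (n - 1)) (e (n - 2 - t))
      \<in> {br a b |a b. a \<in> e ` {2..n - 1} \<and> b \<in> e ` {2..n + 1 - l}}"
    by blast
  then show ?thesis unfolding chain_t by (intro span_neg span_base)
qed

lemma br_lcs_2_lcs: "2 \<le> l \<Longrightarrow> brs sc br (lcs sc br 2) (lcs sc br l) = span (chain ` {l - 3..<chain_length})"
proof -
  assume l: "2 \<le> l"
  let ?G = "{br a b |a b. a \<in> e ` {2..n - 1} \<and> b \<in> e ` {2..n + 1 - l}}"
  have "brs sc br (lcs sc br 2) (lcs sc br l) = span ?G"
    using l lcs_eq_span[of 2] lcs_eq_span[of l] by (simp add: brs_span)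
  also have "\<dots> = span (chain ` {l - 3..<chain_length})"
    unfolding span_eq using l br_e_mem_span_chain chain_mem_span_br by auto
  finally show ?thesis .
qed

lemma ldim_br_lcs_2_lcs:
  "2 \<le> l \<Longrightarrow> ldim sc (brs sc br (lcs sc br 2) (lcs sc br l)) = chain_length - (l - 3)"
  unfolding ldim_def using br_lcs_2_lcs dim_span_chain by simp

lemma theta_2_eq: "theta sc br 2 = chain_length + 3"
  unfolding theta_def
proof (rule Least_equality)
  show "1 \<le> chain_length + 3 \<and> brs sc br (lcs sc br 2) (lcs sc br (chain_length + 3)) = {0}"
    using br_lcs_2_lcs[of "chain_length + 3"] span_chain_eq_0_iff by simp
next
  fix l
  assume l: "1 \<le> l \<and> brs sc br (lcs sc br 2) (lcs sc br l) = {0}"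
  have "brs sc br (lcs sc br 2) (lcs sc br 1) = lcs sc br 3"
    by (simp add: numeral_eq_Suc)
  moreover have "e 2 \<in> lcs sc br 3" "e 2 \<noteq> 0"
    using e_mem_lcs[of 2 2] e_nonzero[of 2] n_ge_6 by (simp_all add: numeral_eq_Suc)
  ultimately have "l \<noteq> 1" using l by force
  then have "2 \<le> l" using l by simp
  then have "span (chain ` {l - 3..<chain_length}) = {0}"
    using l br_lcs_2_lcs[of l] by simp
  then show "chain_length + 3 \<le> l"
    using span_chain_eq_0_iff[of "l - 3"] chain_length_pos by simp
qed

end

theorem mainTheorem13:
  fixes sc :: "complex \<Rightarrow> 'v::ab_group_add \<Rightarrow> 'v"
    and br :: "'v \<Rightarrow> 'v \<Rightarrow> 'v"
    and n z1 :: nat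
  assumes "assoc_triple sc br z1 (n - 2) n"
    and "z1 < n - 2"
  shows "(\<forall>l. 3 \<le> l \<and> l \<le> theta sc br 2 - 1 \<longrightarrow>
            ldim sc (brs sc br (lcs sc br 2) (lcs sc br (l + 1)))
              = ldim sc (brs sc br (lcs sc br 2) (lcs sc br l)) - 1)
       \<and> theta sc br 2 = ldim sc (brs sc br (lcs sc br 2) (lcs sc br 2)) + 3"
proof -
  obtain e where "adapted_basis sc br n e" "4 \<le> n - 2"
      "br (e (n - 2)) (e (n - 2 + 1)) \<noteq> 0"
      "\<forall>k. 4 \<le> k \<and> k < n - 2 \<longrightarrow> br (e k) (e (k + 1)) = 0"
    using assms(1) unfolding assoc_triple_def by blast
  moreover have "filiform sc br n"
    using assms(1) by (simp add: assoc_triple_def)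
  moreover have "n - 2 + 1 = n - 1" using \<open>4 \<le> n - 2\<close> by simp
  ultimately interpret filiform_z2_n_minus_2 sc br n e
    by unfold_locales simp_all
  show ?thesis
    using theta_2_eq ldim_br_lcs_2_lcs by auto
qed

end
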